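(* The category $\mathbf{gOS}^{op}$ is Gröbner.
   Context: Gröbner categories. Let $\mathcal{C}$ be a small category and $c$ an object. An admissible order on the morphisms out of $c$ is a choice, for every object $c'$, of a well-order $\preceq_{c'}$ on $\mathrm{Hom}(c,c')$ such that $f\prec_{c'} f'$ implies $g\circ f\prec_{c''} g\circ f'$ for all $g:c'\to c''$. On morphisms out of $c$ put the preorder $f\le g$ iff $g=h\circ f$ for some $h$; $|c/\mathcal{C}|$ is the associated poset. A poset is Noetherian if every sequence $x_1,x_2,\dots$ has $i<j$ with $x_i\le x_j$. $\mathcal{C}$ is Gröbner if for every object $c$: (G1) morphisms out of $c$ admit an admissible order, and (G2) $|c/\mathcal{C}|$ is Noetherian. The category $\mathbf{gOS}$ of graded ordered surjections has objects $\underline{n}=\{1,\dots,n\}$ for $n\ge 0$. A morphism $f:\underline{n}\to\underline{m}$ is a surjection $f$ such that $\min f^{-1}(i)<\min f^{-1}(j)$ whenever $i<j$, together with a grading $g_f:\underline{m}\to\mathbb{N}$. For $f:\underline{n}\to\underline{m}$ and $h:\underline{m}\to\underline{k}$, the composite $h\circ f$ is the composite of maps with grading $g_{h\circ f}(i)=g_h(i)+\sum_{j\in h^{-1}(i)}g_f(j)$. *)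

theory Defs
  imports Main
begin

text \<open>A small category is presented by a set of objects Ob, hom-sets Hom c c'
  (assumed pairwise disjoint, as in a category), and composition cmp g f = g o f.\<close>

definition out_mor :: "'o set \<Rightarrow> ('o \<Rightarrow> 'o \<Rightarrow> 'm set) \<Rightarrow> 'o \<Rightarrow> 'm set" where
  "out_mor Ob Hom c = (\<Union>c'\<in>Ob. Hom c c')"

definition mor_le :: "'o set \<Rightarrow> ('o \<Rightarrow> 'o \<Rightarrow> 'm set) \<Rightarrow> ('m \<Rightarrow> 'm \<Rightarrow> 'm) \<Rightarrow> 'o \<Rightarrow> 'm \<Rightarrow> 'm \<Rightarrow> bool" where
  "mor_le Ob Hom cmp c f g \<longleftrightarrow>
     (\<exists>c'\<in>Ob. \<exists>c''\<in>Ob. f \<in> Hom c c' \<and> (\<exists>h\<in>Hom c' c''. g = cmp h f))"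

definition admissible_order :: "'o set \<Rightarrow> ('o \<Rightarrow> 'o \<Rightarrow> 'm set) \<Rightarrow> ('m \<Rightarrow> 'm \<Rightarrow> 'm) \<Rightarrow> 'o
    \<Rightarrow> ('o \<Rightarrow> ('m \<times> 'm) set) \<Rightarrow> bool" where
  "admissible_order Ob Hom cmp c R \<longleftrightarrow>
     (\<forall>c'\<in>Ob. well_order_on (Hom c c') (R c')) \<and>
     (\<forall>c'\<in>Ob. \<forall>c''\<in>Ob. \<forall>f\<in>Hom c c'. \<forall>f'\<in>Hom c c'. \<forall>g\<in>Hom c' c''.
        ((f, f') \<in> R c' \<and> f \<noteq> f') \<longrightarrow>
        ((cmp g f, cmp g f') \<in> R c'' \<and> cmp g f \<noteq> cmp g f'))"

text \<open>Noetherianity of the poset |c/C|, stated on representatives.\<close>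
definition noetherian_under :: "'o set \<Rightarrow> ('o \<Rightarrow> 'o \<Rightarrow> 'm set) \<Rightarrow> ('m \<Rightarrow> 'm \<Rightarrow> 'm) \<Rightarrow> 'o \<Rightarrow> bool" where
  "noetherian_under Ob Hom cmp c \<longleftrightarrow>
     (\<forall>x :: nat \<Rightarrow> 'm. (\<forall>k. x k \<in> out_mor Ob Hom c) \<longrightarrow>
        (\<exists>i j. i < j \<and> mor_le Ob Hom cmp c (x i) (x j)))"

definition groebner :: "'o set \<Rightarrow> ('o \<Rightarrow> 'o \<Rightarrow> 'm set) \<Rightarrow> ('m \<Rightarrow> 'm \<Rightarrow> 'm) \<Rightarrow> bool" where
  "groebner Ob Hom cmp \<longleftrightarrow>
     (\<forall>c\<in>Ob. (\<exists>R. admissible_order Ob Hom cmp c R) \<and> noetherian_under Ob Hom cmp c)"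

text \<open>A morphism n -> m is a tuple (n, m, f, g): f the surjection {1..n} -> {1..m}
  (extended by 0 outside {1..n}), g the grading {1..m} -> nat (extended by 0).\<close>
type_synonym gos_mor = "nat \<times> nat \<times> (nat \<Rightarrow> nat) \<times> (nat \<Rightarrow> nat)"

definition gOS_Hom :: "nat \<Rightarrow> nat \<Rightarrow> gos_mor set" where
  "gOS_Hom n m = {(n', m', f, g). n' = n \<and> m' = m \<and>
      f ` {1..n} = {1..m} \<and>
      (\<forall>x. x \<notin> {1..n} \<longrightarrow> f x = 0) \<and>
      (\<forall>i\<in>{1..m}. \<forall>j\<in>{1..m}. i < j \<longrightarrow>
          Min {x\<in>{1..n}. f x = i} < Min {x\<in>{1..n}. f x = j}) \<and>
      (\<forall>y. y \<notin> {1..m} \<longrightarrow> g y = 0)}"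

definition gOS_comp :: "gos_mor \<Rightarrow> gos_mor \<Rightarrow> gos_mor" where
  "gOS_comp h f = (case f of (n, m, ff, gf) \<Rightarrow> case h of (_, k, hh, gh) \<Rightarrow>
      (n, k, (\<lambda>x. if x \<in> {1..n} then hh (ff x) else 0),
             (\<lambda>i. if i \<in> {1..k} then gh i + (\<Sum>j\<in>{j\<in>{1..m}. hh j = i}. gf j) else 0)))"

definition gOSop_Hom :: "nat \<Rightarrow> nat \<Rightarrow> gos_mor set" where
  "gOSop_Hom c c' = gOS_Hom c' c"

definition gOSop_comp :: "gos_mor \<Rightarrow> gos_mor \<Rightarrow> gos_mor" where
  "gOSop_comp g f = gOS_comp f g"

end

theory Submission
  imports Defs "HOL-Library.Ramsey" "HOL-Library.Sublist"
begin

text \<open>(G1): morphisms into c are ordered lexicographically, first by the values of the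
  surjection and then by the grading. Precomposition with an ordered surjection H preserves
  strict comparisons: the first difference of F and F' at position p reappears in F \<circ> H
  and F' \<circ> H at the first preimage of p under H, and all earlier positions are mapped by H
  below p.

  (G2): a morphism n \<rightarrow> c is encoded as the word of its n positions, each labelled by its
  value, by whether it is the first preimage of that value, and (at first preimages) by the
  grading of that value. The labels are compared by equality on the first two components and
  by \<le> on the grading, which is almost full, so by Higman's lemma every infinite sequence
  x of morphisms into c has i < j such that the word of x i embeds into that of x j. Such an
  embedding determines a morphism h with x j = x i \<circ> h.\<close>

section \<open>Ordered surjections\<close>

definition first_preimage :: "(nat \<Rightarrow> nat) \<Rightarrow> nat \<Rightarrow> nat \<Rightarrow> nat" where
  "first_preimage F n i = Min {x \<in> {1..n}. F x = i}"

definition ordered_surj :: "(nat \<Rightarrow> nat) \<Rightarrow> nat \<Rightarrow> nat \<Rightarrow> bool" where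
  "ordered_surj F n m \<longleftrightarrow> F ` {1..n} = {1..m} \<and> (\<forall>x. x \<notin> {1..n} \<longrightarrow> F x = 0) \<and>
     (\<forall>i\<in>{1..m}. \<forall>j\<in>{1..m}. i < j \<longrightarrow> first_preimage F n i < first_preimage F n j)"

lemma mem_gOS_Hom:
  "(n', m', F, G) \<in> gOS_Hom n m \<longleftrightarrow>
     n' = n \<and> m' = m \<and> ordered_surj F n m \<and> (\<forall>y. y \<notin> {1..m} \<longrightarrow> G y = 0)"
  unfolding gOS_Hom_def ordered_surj_def first_preimage_def by auto

lemma gOS_HomE:
  assumes "x \<in> gOS_Hom n m"
  obtains F G where "x = (n, m, F, G)" "ordered_surj F n m" "\<forall>y. y \<notin> {1..m} \<longrightarrow> G y = 0"
  using assms by (cases x) (auto simp: mem_gOS_Hom)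

lemma ordered_surj_range: "ordered_surj F n m \<Longrightarrow> x \<in> {1..n} \<Longrightarrow> F x \<in> {1..m}"
  unfolding ordered_surj_def by blast

lemma ordered_surj_outside: "ordered_surj F n m \<Longrightarrow> x \<notin> {1..n} \<Longrightarrow> F x = 0"
  unfolding ordered_surj_def by blast

lemma first_preimage_in:
  assumes "ordered_surj F n m" "i \<in> {1..m}"
  shows "first_preimage F n i \<in> {1..n}" "F (first_preimage F n i) = i"
proof -
  have "{x \<in> {1..n}. F x = i} \<noteq> {}"
    using assms unfolding ordered_surj_def by (metis (mono_tags, lifting) empty_iff imageE mem_Collect_eq)
  then have "first_preimage F n i \<in> {x \<in> {1..n}. F x = i}"
    unfolding first_preimage_def by (intro Min_in) auto
  then show "first_preimage F n i \<in> {1..n}" "F (first_preimage F n i) = i" by auto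
qed

lemma first_preimage_le: "x \<in> {1..n} \<Longrightarrow> F x = i \<Longrightarrow> first_preimage F n i \<le> x"
  unfolding first_preimage_def by (rule Min_le) auto

lemma first_preimage_eqI:
  "x \<in> {1..n} \<Longrightarrow> F x = i \<Longrightarrow> (\<And>y. y \<in> {1..n} \<Longrightarrow> F y = i \<Longrightarrow> x \<le> y) \<Longrightarrow>
     first_preimage F n i = x"
  unfolding first_preimage_def by (rule Min_eqI) auto

lemma first_preimage_strict_mono:
  "ordered_surj F n m \<Longrightarrow> i \<in> {1..m} \<Longrightarrow> j \<in> {1..m} \<Longrightarrow> i < j \<Longrightarrow>
     first_preimage F n i < first_preimage F n j"
  unfolding ordered_surj_def by blast

lemma first_preimage_mono:
  "ordered_surj F n m \<Longrightarrow> i \<in> {1..m} \<Longrightarrow> j \<in> {1..m} \<Longrightarrow> i \<le> j \<Longrightarrow>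
     first_preimage F n i \<le> first_preimage F n j"
  using first_preimage_strict_mono[of F n m i j] by (cases "i = j") auto

lemma less_before_first_preimage:
  assumes F: "ordered_surj F n m" and x: "x \<in> {1..n}" and i: "i \<in> {1..m}"
    and before: "x < first_preimage F n i"
  shows "F x < i"
proof (rule ccontr)
  assume "\<not> F x < i"
  then have "first_preimage F n i \<le> first_preimage F n (F x)"
    using first_preimage_mono[OF F i ordered_surj_range[OF F x]] by simp
  also have "\<dots> \<le> x" using first_preimage_le x by blast
  finally show False using before by simp
qed

lemma ordered_surj_comp:
  assumes F: "ordered_surj F n m" and H: "ordered_surj H n'' n"
  shows "ordered_surj (\<lambda>x. if x \<in> {1..n''} then F (H x) else 0) n'' m"
proof -
  let ?FH = "\<lambda>x. if x \<in> {1..n''} then F (H x) else 0"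
  have first_comp: "first_preimage ?FH n'' i = first_preimage H n'' (first_preimage F n i)"
    if i: "i \<in> {1..m}" for i
  proof (rule first_preimage_eqI)
    note Fi = first_preimage_in[OF F i]
    note HFi = first_preimage_in[OF H Fi(1)]
    show "first_preimage H n'' (first_preimage F n i) \<in> {1..n''}" by (fact HFi(1))
    show "?FH (first_preimage H n'' (first_preimage F n i)) = i" using HFi Fi by simp
    fix y assume y: "y \<in> {1..n''}" "?FH y = i"
    then have Hy: "H y \<in> {1..n}" "F (H y) = i" using ordered_surj_range[OF H] by auto
    have "first_preimage H n'' (first_preimage F n i) \<le> first_preimage H n'' (H y)"
      using first_preimage_mono[OF H Fi(1) Hy(1)] first_preimage_le[of "H y" n F i] Hy by blast
    also have "\<dots> \<le> y" using first_preimage_le y(1) by blast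
    finally show "first_preimage H n'' (first_preimage F n i) \<le> y" .
  qed
  have "?FH ` {1..n''} = F ` H ` {1..n''}" by (auto simp: image_iff)
  also have "\<dots> = {1..m}" using F H unfolding ordered_surj_def by simp
  finally show ?thesis
    unfolding ordered_surj_def
    using first_comp first_preimage_strict_mono[OF F] first_preimage_strict_mono[OF H]
      first_preimage_in(1)[OF F]
    by auto
qed

lemma ordered_surjI:
  assumes range: "H ` {1..n'} \<subseteq> {1..n}" and outside: "\<And>q. q \<notin> {1..n'} \<Longrightarrow> H q = 0"
    and mono: "strict_mono_on {1..n} \<iota>" and \<iota>_range: "\<iota> ` {1..n} \<subseteq> {1..n'}"
    and H_\<iota>: "\<And>p. p \<in> {1..n} \<Longrightarrow> H (\<iota> p) = p"
    and \<iota>_H: "\<And>q. q \<in> {1..n'} \<Longrightarrow> \<iota> (H q) \<le> q"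
  shows "ordered_surj H n' n"
proof -
  have \<iota>_in: "\<iota> p \<in> {1..n'}" if "p \<in> {1..n}" for p using \<iota>_range that by blast
  have first_H: "first_preimage H n' p = \<iota> p" if p: "p \<in> {1..n}" for p
  proof (rule first_preimage_eqI)
    show "\<iota> p \<in> {1..n'}" "H (\<iota> p) = p" using \<iota>_in[OF p] H_\<iota>[OF p] by auto
    show "\<iota> p \<le> q" if "q \<in> {1..n'}" "H q = p" for q using \<iota>_H[OF that(1)] that(2) by simp
  qed
  have "{1..n} \<subseteq> H ` {1..n'}"
  proof
    fix p assume p: "p \<in> {1..n}"
    show "p \<in> H ` {1..n'}" using H_\<iota>[OF p] \<iota>_in[OF p] by (intro image_eqI[of p H "\<iota> p"]) auto
  qed
  then show ?thesis
    unfolding ordered_surj_def using range outside first_H strict_mono_onD[OF mono] by auto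
qed

lemma gOS_comp_eq:
  "gOS_comp (n, c, F, G) (n'', n, H, K) =
     (n'', c, \<lambda>x. if x \<in> {1..n''} then F (H x) else 0,
      \<lambda>a. if a \<in> {1..c} then G a + (\<Sum>j \<in> {j \<in> {1..n}. F j = a}. K j) else 0)"
  by (simp add: gOS_comp_def)

lemma gOS_comp_closed:
  assumes "x \<in> gOS_Hom n c" "h \<in> gOS_Hom n'' n"
  shows "gOS_comp x h \<in> gOS_Hom n'' c"
proof -
  obtain F G where x: "x = (n, c, F, G)" "ordered_surj F n c" "\<forall>y. y \<notin> {1..c} \<longrightarrow> G y = 0"
    using assms(1) by (rule gOS_HomE)
  obtain H K where h: "h = (n'', n, H, K)" "ordered_surj H n'' n"
    using assms(2) by (rule gOS_HomE)
  show ?thesis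
    using ordered_surj_comp[OF x(2) h(2)] x(3) unfolding x(1) h(1) gOS_comp_eq mem_gOS_Hom by simp
qed

section \<open>An admissible order\<close>

lemma well_order_on_inv_image:
  assumes "inj_on f A" "wf r" "trans r" "total r"
  shows "well_order_on A {(x, y). x \<in> A \<and> y \<in> A \<and> (x = y \<or> (f x, f y) \<in> r)}"
    (is "well_order_on A ?R")
  unfolding well_order_on_def linear_order_on_def partial_order_on_def preorder_on_def
proof (intro conjI)
  have irrefl: "(u, u) \<notin> r" for u using assms(2) by simp
  show "?R \<subseteq> A \<times> A" "refl_on A ?R" by (auto simp: refl_on_def)
  show "trans ?R" using assms(3) unfolding trans_def by blast
  show "antisym ?R" using assms(3) irrefl unfolding antisym_def trans_def by blast
  show "total_on A ?R" using assms(1,4) unfolding total_on_def inj_on_def by blast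
  have "?R - Id \<subseteq> inv_image r f" by auto
  then show "wf (?R - Id)" using wf_inv_image[OF assms(2)] by (rule wf_subset[rotated])
qed

definition tuple :: "(nat \<Rightarrow> 'a) \<Rightarrow> nat \<Rightarrow> 'a list" where
  "tuple F n = map F [1..<Suc n]"

lemma length_tuple [simp]: "length (tuple F n) = n"
  by (simp add: tuple_def)

lemma nth_tuple: "k < n \<Longrightarrow> tuple F n ! k = F (Suc k)"
  by (simp add: tuple_def del: upt_Suc)

lemma tuple_eq_iff: "tuple F n = tuple F' n \<longleftrightarrow> (\<forall>q \<in> {1..n}. F q = F' q)"
  by (auto simp: tuple_def)

lemma lenlex_same_length_iff:
  "length xs = length ys \<Longrightarrow>
     (xs, ys) \<in> lenlex r \<longleftrightarrow> (\<exists>i < length xs. take i xs = take i ys \<and> (xs ! i, ys ! i) \<in> r)"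
  by (simp add: lenlex_conv lexord_lex lexord_take_index_conv)

lemma ex_less_Suc_iff: "(\<exists>i < n. P (Suc i)) \<longleftrightarrow> (\<exists>p \<in> {1..n}. P p)"
proof
  assume "\<exists>p \<in> {1..n}. P p"
  then obtain p where "p \<in> {1..n}" "P p" by blast
  then show "\<exists>i < n. P (Suc i)" by (intro exI[of _ "p - 1"]) auto
qed auto

lemma lenlex_tuple_iff:
  "(tuple F n, tuple F' n) \<in> lenlex r \<longleftrightarrow>
     (\<exists>p \<in> {1..n}. (\<forall>q \<in> {1..<p}. F q = F' q) \<and> (F p, F' p) \<in> r)"
proof -
  have take_tuple: "take i (tuple F n) = tuple F i" if "i \<le> n" for F :: "nat \<Rightarrow> 'a" and i
    using that by (simp add: tuple_def take_map min_def del: upt_Suc)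
  have "(tuple F n, tuple F' n) \<in> lenlex r \<longleftrightarrow>
      (\<exists>i < n. take i (tuple F n) = take i (tuple F' n) \<and> (tuple F n ! i, tuple F' n ! i) \<in> r)"
    using lenlex_same_length_iff[of "tuple F n" "tuple F' n" r] by simp
  also have "\<dots> \<longleftrightarrow> (\<exists>i < n. (\<forall>q \<in> {1..<Suc i}. F q = F' q) \<and> (F (Suc i), F' (Suc i)) \<in> r)"
    by (intro ex_cong1 conj_cong refl) (simp_all add: take_tuple nth_tuple tuple_eq_iff atLeastLessThanSuc_atLeastAtMost)
  also have "\<dots> \<longleftrightarrow> (\<exists>p \<in> {1..n}. (\<forall>q \<in> {1..<p}. F q = F' q) \<and> (F p, F' p) \<in> r)"
    by (rule ex_less_Suc_iff)
  finally show ?thesis .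
qed

lemma lenlex_tuple_precomp:
  assumes H: "ordered_surj H n'' n" and less: "(tuple F n, tuple F' n) \<in> lenlex r"
  shows "(tuple (F \<circ> H) n'', tuple (F' \<circ> H) n'') \<in> lenlex r"
proof -
  obtain p where p: "p \<in> {1..n}" "\<forall>q \<in> {1..<p}. F q = F' q" "(F p, F' p) \<in> r"
    using less unfolding lenlex_tuple_iff by blast
  let ?r0 = "first_preimage H n'' p"
  have "(F \<circ> H) q = (F' \<circ> H) q" if q: "q \<in> {1..<?r0}" for q
  proof -
    have "q \<in> {1..n''}" using q first_preimage_in(1)[OF H p(1)] by auto
    then have "H q \<in> {1..<p}"
      using ordered_surj_range[OF H] less_before_first_preimage[OF H _ p(1)] q by auto
    then show ?thesis using p(2) by simp
  qed
  moreover have "((F \<circ> H) ?r0, (F' \<circ> H) ?r0) \<in> r"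
    using p(3) first_preimage_in(2)[OF H p(1)] by simp
  ultimately show ?thesis
    unfolding lenlex_tuple_iff using first_preimage_in(1)[OF H p(1)] by blast
qed

lemma lenlex_tuple_add:
  assumes "(tuple G c, tuple G' c) \<in> lenlex less_than"
  shows "(tuple (\<lambda>a. G a + S a) c, tuple (\<lambda>a. G' a + S a) c) \<in> lenlex less_than"
  using assms unfolding lenlex_tuple_iff by auto

definition gOS_key :: "gos_mor \<Rightarrow> nat list \<times> nat list" where
  "gOS_key x = (case x of (n, m, F, G) \<Rightarrow> (tuple F n, tuple G m))"

definition gOS_key_less :: "((nat list \<times> nat list) \<times> (nat list \<times> nat list)) set" where
  "gOS_key_less = lenlex less_than <*lex*> lenlex less_than"

definition gOS_order :: "nat \<Rightarrow> nat \<Rightarrow> (gos_mor \<times> gos_mor) set" where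
  "gOS_order n c = {(x, y). x \<in> gOS_Hom n c \<and> y \<in> gOS_Hom n c \<and>
     (x = y \<or> (gOS_key x, gOS_key y) \<in> gOS_key_less)}"

lemma inj_on_gOS_key: "inj_on gOS_key (gOS_Hom n c)"
proof (rule inj_onI)
  fix x y assume x: "x \<in> gOS_Hom n c" and y: "y \<in> gOS_Hom n c" and key: "gOS_key x = gOS_key y"
  obtain F G where x': "x = (n, c, F, G)" "ordered_surj F n c" "\<forall>a. a \<notin> {1..c} \<longrightarrow> G a = 0"
    using x by (rule gOS_HomE)
  obtain F' G' where y': "y = (n, c, F', G')" "ordered_surj F' n c" "\<forall>a. a \<notin> {1..c} \<longrightarrow> G' a = 0"
    using y by (rule gOS_HomE)
  have "\<forall>q \<in> {1..n}. F q = F' q" "\<forall>a \<in> {1..c}. G a = G' a"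
    using key unfolding x'(1) y'(1) gOS_key_def by (simp_all add: tuple_eq_iff)
  moreover have "F q = F' q" if "q \<notin> {1..n}" for q
    using that ordered_surj_outside[OF x'(2)] ordered_surj_outside[OF y'(2)] by simp
  ultimately have "F = F'" "G = G'"
    using x'(3) y'(3) by (metis ext)+
  then show "x = y" using x'(1) y'(1) by simp
qed

lemma wf_gOS_key_less: "wf gOS_key_less"
  unfolding gOS_key_less_def by (intro wf_lex_prod wf_lenlex wf_less_than)

lemma well_order_gOS_order: "well_order_on (gOS_Hom n c) (gOS_order n c)"
  unfolding gOS_order_def
proof (rule well_order_on_inv_image[OF inj_on_gOS_key wf_gOS_key_less])
  show "trans gOS_key_less"
    unfolding gOS_key_less_def by (intro trans_lex_prod lenlex_transI trans_less_than)
  show "total gOS_key_less"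
    unfolding gOS_key_less_def by (intro total_lex_prod total_lenlex total_less_than)
qed

lemma gOS_key_comp_mono:
  assumes x: "x \<in> gOS_Hom n c" and x': "x' \<in> gOS_Hom n c" and h: "h \<in> gOS_Hom n'' n"
    and less: "(gOS_key x, gOS_key x') \<in> gOS_key_less"
  shows "(gOS_key (gOS_comp x h), gOS_key (gOS_comp x' h)) \<in> gOS_key_less"
proof -
  obtain F G where x: "x = (n, c, F, G)" using x by (rule gOS_HomE)
  obtain F' G' where x': "x' = (n, c, F', G')" using x' by (rule gOS_HomE)
  obtain H K where h: "h = (n'', n, H, K)" "ordered_surj H n'' n" using h by (rule gOS_HomE)
  define S where "S F a = (\<Sum>j \<in> {j \<in> {1..n}. F j = a}. K j)" for F :: "nat \<Rightarrow> nat" and a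
  have key_comp: "gOS_key (gOS_comp (n, c, F, G) h) = (tuple (F \<circ> H) n'', tuple (\<lambda>a. G a + S F a) c)"
    for F G
    unfolding h gOS_comp_eq gOS_key_def S_def by (simp add: tuple_eq_iff)
  consider (surj) "(tuple F n, tuple F' n) \<in> lenlex less_than"
    | (grading) "tuple F n = tuple F' n" "(tuple G c, tuple G' c) \<in> lenlex less_than"
    using less unfolding x x' gOS_key_def gOS_key_less_def by auto
  then show ?thesis
  proof cases
    case surj
    then show ?thesis
      unfolding x x' key_comp gOS_key_less_def by (simp add: lenlex_tuple_precomp[OF h(2)])
  next
    case grading
    then have "\<forall>q \<in> {1..n}. F q = F' q" by (simp add: tuple_eq_iff)
    then have "tuple (F \<circ> H) n'' = tuple (F' \<circ> H) n''" "S F = S F'"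
      using ordered_surj_range[OF h(2)] unfolding tuple_eq_iff S_def
      by (auto intro!: sum.cong)
    then show ?thesis
      unfolding x x' key_comp gOS_key_less_def using lenlex_tuple_add[OF grading(2)] by simp
  qed
qed

lemma gOSop_admissible_order:
  "admissible_order (UNIV :: nat set) gOSop_Hom gOSop_comp c (\<lambda>c'. gOS_order c' c)"
  unfolding admissible_order_def gOSop_Hom_def gOSop_comp_def
proof (intro conjI ballI impI)
  fix c' show "well_order_on (gOS_Hom c' c) (gOS_order c' c)" by (rule well_order_gOS_order)
next
  fix c' c'' f f' g
  assume f: "f \<in> gOS_Hom c' c" and f': "f' \<in> gOS_Hom c' c" and g: "g \<in> gOS_Hom c'' c'"
    and less: "(f, f') \<in> gOS_order c' c \<and> f \<noteq> f'"
  have key_less: "(gOS_key (gOS_comp f g), gOS_key (gOS_comp f' g)) \<in> gOS_key_less"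
    using less gOS_key_comp_mono[OF f f' g] by (auto simp: gOS_order_def)
  then have "gOS_comp f g \<noteq> gOS_comp f' g"
    using wf_not_refl[OF wf_gOS_key_less] by metis
  with key_less show "(gOS_comp f g, gOS_comp f' g) \<in> gOS_order c'' c" "gOS_comp f g \<noteq> gOS_comp f' g"
    using gOS_comp_closed[OF f g] gOS_comp_closed[OF f' g] by (auto simp: gOS_order_def)
qed

section \<open>Almost full relations and Higman's lemma\<close>

definition good :: "('a \<Rightarrow> 'a \<Rightarrow> bool) \<Rightarrow> (nat \<Rightarrow> 'a) \<Rightarrow> bool" where
  "good P s \<longleftrightarrow> (\<exists>i j. i < j \<and> P (s i) (s j))"

definition almost_full_on :: "('a \<Rightarrow> 'a \<Rightarrow> bool) \<Rightarrow> 'a set \<Rightarrow> bool" where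
  "almost_full_on P A \<longleftrightarrow> (\<forall>s. (\<forall>i. s i \<in> A) \<longrightarrow> good P s)"

lemma almost_full_onD:
  fixes s :: "nat \<Rightarrow> 'a"
  assumes "almost_full_on P A" "\<And>i. s i \<in> A"
  shows "\<exists>i j. i < j \<and> P (s i) (s j)"
  using assms(1)[unfolded almost_full_on_def, rule_format, of s] assms(2) unfolding good_def by blast

lemma almost_full_on_imp_homogeneous_subseq:
  assumes af: "almost_full_on P A" and s: "\<And>i. s i \<in> A"
  obtains \<phi> :: "nat \<Rightarrow> nat" where "strict_mono \<phi>" "\<And>i j. i < j \<Longrightarrow> P (s (\<phi> i)) (s (\<phi> j))"
proof -
  define colour where "colour X = (if P (s (Min X)) (s (Max X)) then 0 else 1 :: nat)" for X
  have "\<exists>Y t. Y \<subseteq> UNIV \<and> infinite Y \<and> t < 2 \<and> (\<forall>x\<in>Y. \<forall>y\<in>Y. x \<noteq> y \<longrightarrow> colour {x, y} = t)"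
    by (rule Ramsey2) (auto simp: colour_def)
  then obtain Y t where Y: "infinite Y" and hom: "\<forall>x\<in>Y. \<forall>y\<in>Y. x \<noteq> y \<longrightarrow> colour {x, y} = t"
    by blast
  define \<phi> where "\<phi> = enumerate Y"
  have mono: "strict_mono \<phi>"
    unfolding \<phi>_def using Y(1) by (intro strict_monoI enumerate_mono)
  have colour_\<phi>: "colour {\<phi> i, \<phi> j} = t"
    "colour {\<phi> i, \<phi> j} = (if P (s (\<phi> i)) (s (\<phi> j)) then 0 else 1)" if "i < j" for i j
  proof -
    have "\<phi> i < \<phi> j" using mono that by (simp add: strict_mono_less)
    moreover have "\<phi> i \<in> Y" "\<phi> j \<in> Y" unfolding \<phi>_def using Y by (simp_all add: enumerate_in_set)
    ultimately show "colour {\<phi> i, \<phi> j} = t" using hom by simp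
    show "colour {\<phi> i, \<phi> j} = (if P (s (\<phi> i)) (s (\<phi> j)) then 0 else 1)"
      unfolding colour_def using \<open>\<phi> i < \<phi> j\<close> by simp
  qed
  have "\<exists>i j. i < j \<and> P ((s \<circ> \<phi>) i) ((s \<circ> \<phi>) j)"
    by (rule almost_full_onD[OF af]) (simp add: s)
  then obtain i j where "i < j" "P (s (\<phi> i)) (s (\<phi> j))" by auto
  then have "t = 0" using colour_\<phi> by fastforce
  then show ?thesis using that[OF mono] colour_\<phi> by (metis zero_neq_one)
qed

text \<open>Higman's lemma by Nash-Williams' minimal bad sequence argument: min_bad_seq n is a
  shortest list continuing min_bad_seq 0, ..., min_bad_seq (n - 1) to a bad sequence, and
  dropping the heads along a homogeneous subsequence of its heads contradicts minimality.\<close>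

context
  fixes P :: "'a \<Rightarrow> 'a \<Rightarrow> bool" and A :: "'a set"
begin

definition bad_lists :: "(nat \<Rightarrow> 'a list) \<Rightarrow> bool" where
  "bad_lists s \<longleftrightarrow> (\<forall>i. s i \<in> lists A) \<and> \<not> good (list_emb P) s"

definition bad_prefix :: "'a list list \<Rightarrow> bool" where
  "bad_prefix xs \<longleftrightarrow> (\<exists>s. bad_lists s \<and> xs = map s [0..<length xs])"

definition min_extension :: "'a list list \<Rightarrow> 'a list" where
  "min_extension xs = (SOME w. bad_prefix (xs @ [w]) \<and>
     (\<forall>w'. bad_prefix (xs @ [w']) \<longrightarrow> length w \<le> length w'))"

lemma min_extension:
  assumes "bad_prefix xs"
  shows "bad_prefix (xs @ [min_extension xs])"
    and "bad_prefix (xs @ [w]) \<Longrightarrow> length (min_extension xs) \<le> length w"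
proof -
  obtain s where s: "bad_lists s" "xs = map s [0..<length xs]"
    using assms unfolding bad_prefix_def by blast
  then have "bad_prefix (xs @ [s (length xs)])"
    unfolding bad_prefix_def by (intro exI[of _ s]) simp
  then have "\<exists>w. bad_prefix (xs @ [w]) \<and> (\<forall>w'. bad_prefix (xs @ [w']) \<longrightarrow> length w \<le> length w')"
    by (rule ex_has_least_nat)
  then have "bad_prefix (xs @ [min_extension xs]) \<and>
      (\<forall>w'. bad_prefix (xs @ [w']) \<longrightarrow> length (min_extension xs) \<le> length w')"
    unfolding min_extension_def by (rule someI_ex)
  then show "bad_prefix (xs @ [min_extension xs])"
    and "bad_prefix (xs @ [w]) \<Longrightarrow> length (min_extension xs) \<le> length w" by blast+
qed

primrec min_bad_prefix :: "nat \<Rightarrow> 'a list list" where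
  "min_bad_prefix 0 = []"
| "min_bad_prefix (Suc n) = min_bad_prefix n @ [min_extension (min_bad_prefix n)]"

definition min_bad_seq :: "nat \<Rightarrow> 'a list" where
  "min_bad_seq n = min_extension (min_bad_prefix n)"

lemma min_bad_prefix_eq: "min_bad_prefix n = map min_bad_seq [0..<n]"
  by (induction n) (simp_all add: min_bad_seq_def)

lemma bad_prefix_min_bad_prefix: "\<exists>s. bad_lists s \<Longrightarrow> bad_prefix (min_bad_prefix n)"
proof (induction n)
  case 0
  then show ?case by (simp add: bad_prefix_def)
next
  case (Suc n)
  then show ?case by (simp add: min_extension(1))
qed

lemma min_bad_seq_is_bad:
  assumes "\<exists>s. bad_lists s"
  shows "bad_lists min_bad_seq"
proof -
  have agree: "\<exists>s. bad_lists s \<and> (\<forall>k \<le> n. s k = min_bad_seq k)" for n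
  proof -
    obtain s where "bad_lists s" "map min_bad_seq [0..<Suc n] = map s [0..<Suc n]"
      using bad_prefix_min_bad_prefix[OF assms, of "Suc n"]
      unfolding bad_prefix_def min_bad_prefix_eq by auto
    then show ?thesis by (intro exI[of _ s]) (auto simp del: upt_Suc)
  qed
  show ?thesis
    unfolding bad_lists_def good_def
  proof (intro conjI allI notI)
    fix i show "min_bad_seq i \<in> lists A"
      using agree[of i] unfolding bad_lists_def by (metis order_refl)
  next
    assume "\<exists>i j. i < j \<and> list_emb P (min_bad_seq i) (min_bad_seq j)"
    then obtain i j where ij: "i < j" "list_emb P (min_bad_seq i) (min_bad_seq j)" by blast
    obtain s where s: "bad_lists s" "\<forall>k \<le> j. s k = min_bad_seq k" using agree by blast
    then have "list_emb P (s i) (s j)" using ij by simp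
    with s(1) ij(1) show False unfolding bad_lists_def good_def by blast
  qed
qed

lemma min_bad_seq_minimal:
  assumes "\<exists>s. bad_lists s" "bad_lists s" "\<forall>k < n. s k = min_bad_seq k"
  shows "length (min_bad_seq n) \<le> length (s n)"
proof -
  have "bad_prefix (min_bad_prefix n @ [s n])"
    unfolding bad_prefix_def min_bad_prefix_eq using assms(2,3)
    by (intro exI[of _ s]) simp
  then show ?thesis
    unfolding min_bad_seq_def by (rule min_extension(2)[OF bad_prefix_min_bad_prefix[OF assms(1)]])
qed

lemma bad_lists_splice_tails:
  assumes bad: "bad_lists m" and split: "\<And>n. m n = a n # v n"
    and mono: "strict_mono \<phi>" and hom: "\<And>i j. i < j \<Longrightarrow> P (a (\<phi> i)) (a (\<phi> j))"
  shows "bad_lists (\<lambda>k. if k < \<phi> 0 then m k else v (\<phi> (k - \<phi> 0)))"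
    (is "bad_lists ?s")
proof -
  have no_emb: "\<not> list_emb P (m i) (m j)" if "i < j" for i j
    using bad that unfolding bad_lists_def good_def by blast
  have "?s k \<in> lists A" for k
    using bad split[of "\<phi> (k - \<phi> 0)"] unfolding bad_lists_def by (metis Cons_in_lists_iff)
  moreover have "\<not> list_emb P (?s i) (?s j)" if ij: "i < j" for i j
  proof (cases "j < \<phi> 0")
    case True
    then show ?thesis using ij no_emb by simp
  next
    case j: False
    show ?thesis
    proof (cases "i < \<phi> 0")
      case True
      have "\<phi> 0 \<le> \<phi> (j - \<phi> 0)" using mono by (simp add: strict_mono_less_eq)
      then have "\<not> list_emb P (m i) (m (\<phi> (j - \<phi> 0)))" using True by (intro no_emb) linarith
      then show ?thesis using True j split[of "\<phi> (j - \<phi> 0)"] by auto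
    next
      case False
      have "i - \<phi> 0 < j - \<phi> 0" using ij False by simp
      then have "\<phi> (i - \<phi> 0) < \<phi> (j - \<phi> 0)" using mono by (simp add: strict_mono_less)
      then have "\<not> list_emb P (m (\<phi> (i - \<phi> 0))) (m (\<phi> (j - \<phi> 0)))" by (rule no_emb)
      then show ?thesis using False j hom[OF \<open>i - \<phi> 0 < j - \<phi> 0\<close>] by (simp add: split)
    qed
  qed
  ultimately show ?thesis unfolding bad_lists_def good_def by blast
qed

lemma almost_full_on_lists:
  assumes af: "almost_full_on P A"
  shows "almost_full_on (list_emb P) (lists A)"
proof (rule ccontr)
  assume "\<not> almost_full_on (list_emb P) (lists A)"
  then have ex_bad: "\<exists>s. bad_lists s" unfolding almost_full_on_def bad_lists_def by blast
  let ?m = min_bad_seq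
  have bad: "bad_lists ?m" using min_bad_seq_is_bad[OF ex_bad] .
  have nonempty: "?m n \<noteq> []" for n
  proof
    assume "?m n = []"
    then have "list_emb P (?m n) (?m (Suc n))" by simp
    with bad show False unfolding bad_lists_def good_def by blast
  qed
  then have split: "?m n = hd (?m n) # tl (?m n)" for n by simp
  have "hd (?m n) \<in> A" for n
    using bad split[of n] unfolding bad_lists_def by (metis Cons_in_lists_iff)
  then obtain \<phi> :: "nat \<Rightarrow> nat" where mono: "strict_mono \<phi>"
    and hom: "\<And>i j. i < j \<Longrightarrow> P (hd (?m (\<phi> i))) (hd (?m (\<phi> j)))"
    using almost_full_on_imp_homogeneous_subseq[OF af, of "\<lambda>n. hd (?m n)"] by blast
  let ?s = "\<lambda>k. if k < \<phi> 0 then ?m k else tl (?m (\<phi> (k - \<phi> 0)))"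
  have "bad_lists ?s" using bad_lists_splice_tails[OF bad split mono hom] .
  then have "length (?m (\<phi> 0)) \<le> length (?s (\<phi> 0))"
    by (intro min_bad_seq_minimal[OF ex_bad]) simp_all
  then show False using nonempty[of "\<phi> 0"] by (cases "?m (\<phi> 0)") simp_all
qed

end

definition fst_eq_snd_le :: "'a \<times> 'b::ord \<Rightarrow> 'a \<times> 'b \<Rightarrow> bool" where
  "fst_eq_snd_le u v \<longleftrightarrow> fst u = fst v \<and> snd u \<le> snd v"

lemma almost_full_on_fst_eq_snd_le:
  assumes "finite B"
  shows "almost_full_on fst_eq_snd_le (B \<times> (UNIV :: 'b::wellorder set))"
  unfolding almost_full_on_def
proof (intro allI impI)
  fix s :: "nat \<Rightarrow> 'a \<times> 'b" assume "\<forall>i. s i \<in> B \<times> UNIV"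
  then have "(fst \<circ> s) ` UNIV \<subseteq> B" by (auto simp: mem_Times_iff)
  then have "finite ((fst \<circ> s) ` UNIV)" using assms by (rule finite_subset)
  then obtain i0 where "infinite {i. fst (s i) = fst (s i0)}"
    using pigeonhole_infinite[OF infinite_UNIV_nat] by auto
  define I where "I = {i. fst (s i) = fst (s i0)}"
  define v where "v = (LEAST v. v \<in> snd ` s ` I)"
  have "v \<in> snd ` s ` I" unfolding v_def I_def by (rule LeastI) auto
  then obtain i where i: "i \<in> I" "snd (s i) = v" by blast
  obtain j where j: "i < j" "j \<in> I"
    using \<open>infinite _\<close> unfolding I_def[symmetric] infinite_nat_iff_unbounded by blast
  have "v \<le> snd (s j)" unfolding v_def using j(2) by (auto intro: Least_le)
  then have "fst_eq_snd_le (s i) (s j)" using i j(2) unfolding fst_eq_snd_le_def I_def by simp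
  then show "good fst_eq_snd_le s" unfolding good_def using j(1) by blast
qed

lemma list_emb_nth_strict_mono:
  assumes "list_emb P xs ys"
  obtains \<iota> where "strict_mono_on {..<length xs} \<iota>"
    "\<And>k. k < length xs \<Longrightarrow> \<iota> k < length ys \<and> P (xs ! k) (ys ! \<iota> k)"
  using assms
proof (induction arbitrary: thesis rule: list_emb.induct)
  case (list_emb_Nil ys)
  then show ?case by (simp add: strict_mono_on_def)
next
  case (list_emb_Cons xs ys y)
  then obtain \<iota> where "strict_mono_on {..<length xs} \<iota>"
    "\<And>k. k < length xs \<Longrightarrow> \<iota> k < length ys \<and> P (xs ! k) (ys ! \<iota> k)" by blast
  then show ?case by (intro list_emb_Cons.prems[of "Suc \<circ> \<iota>"]) (auto simp: strict_mono_on_def)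
next
  case (list_emb_Cons2 x y xs ys)
  then obtain \<iota> where \<iota>: "strict_mono_on {..<length xs} \<iota>"
    "\<And>k. k < length xs \<Longrightarrow> \<iota> k < length ys \<and> P (xs ! k) (ys ! \<iota> k)" by blast
  define \<iota>' where "\<iota>' k = (case k of 0 \<Rightarrow> 0 | Suc k \<Rightarrow> Suc (\<iota> k))" for k
  show ?case
  proof (rule list_emb_Cons2.prems)
    show "strict_mono_on {..<length (x # xs)} \<iota>'"
      using \<iota>(1) unfolding strict_mono_on_def \<iota>'_def by (auto split: nat.split)
    show "\<iota>' k < length (y # ys) \<and> P ((x # xs) ! k) ((y # ys) ! \<iota>' k)" if "k < length (x # xs)" for k
      using that \<iota>(2) list_emb_Cons2.hyps(1) by (cases k) (auto simp: \<iota>'_def)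
  qed
qed

lemma list_emb_tuple:
  assumes "list_emb P (tuple f n) (tuple g n')"
  obtains \<iota> where "strict_mono_on {1..n} \<iota>" "\<iota> ` {1..n} \<subseteq> {1..n'}"
    "\<And>p. p \<in> {1..n} \<Longrightarrow> P (f p) (g (\<iota> p))"
proof -
  obtain \<iota> where mono: "strict_mono_on {..<n} \<iota>"
    and emb: "\<And>k. k < n \<Longrightarrow> \<iota> k < n' \<and> P (tuple f n ! k) (tuple g n' ! \<iota> k)"
    using list_emb_nth_strict_mono[OF assms] by auto
  show ?thesis
  proof (rule that[of "\<lambda>p. Suc (\<iota> (p - 1))"])
    show "strict_mono_on {1..n} (\<lambda>p. Suc (\<iota> (p - 1)))"
    proof (rule strict_mono_onI)
      fix p q assume "p \<in> {1..n}" "q \<in> {1..n}" "p < q"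
      then have "\<iota> (p - 1) < \<iota> (q - 1)" by (intro strict_mono_onD[OF mono]) auto
      then show "Suc (\<iota> (p - 1)) < Suc (\<iota> (q - 1))" by simp
    qed
    show "(\<lambda>p. Suc (\<iota> (p - 1))) ` {1..n} \<subseteq> {1..n'}"
    proof (rule image_subsetI)
      fix p assume "p \<in> {1..n}"
      then have "\<iota> (p - 1) < n'" using emb[of "p - 1"] by auto
      then show "Suc (\<iota> (p - 1)) \<in> {1..n'}" by simp
    qed
    show "P (f p) (g (Suc (\<iota> (p - 1))))" if p: "p \<in> {1..n}" for p
    proof -
      have "p - 1 < n" using p by auto
      with emb have "\<iota> (p - 1) < n'" "P (tuple f n ! (p - 1)) (tuple g n' ! \<iota> (p - 1))" by auto
      moreover have "tuple f n ! (p - 1) = f p" using p \<open>p - 1 < n\<close> by (simp add: nth_tuple)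
      ultimately show ?thesis by (simp add: nth_tuple)
    qed
  qed
qed

section \<open>Noetherianity\<close>

text \<open>H q is the largest p with \<iota> p \<le> q and F p = F' q; such p exist because \<iota> maps the
  first preimage of F' q under F to a position \<le> q.\<close>

lemma ordered_surj_factor:
  assumes F: "ordered_surj F n c" and F': "ordered_surj F' n' c"
    and mono: "strict_mono_on {1..n} \<iota>" and range: "\<iota> ` {1..n} \<subseteq> {1..n'}"
    and same_value: "\<And>p. p \<in> {1..n} \<Longrightarrow> F' (\<iota> p) = F p"
    and first: "\<And>a. a \<in> {1..c} \<Longrightarrow> \<iota> (first_preimage F n a) = first_preimage F' n' a"
  obtains H where "ordered_surj H n' n" "\<And>q. q \<in> {1..n'} \<Longrightarrow> F (H q) = F' q"
proof -
  define C where "C q = {p \<in> {1..n}. \<iota> p \<le> q \<and> F p = F' q}" for q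
  define H where "H q = (if q \<in> {1..n'} then Max (C q) else 0)" for q
  have finite_C: "finite (C q)" for q unfolding C_def by simp
  have H_in_C: "H q \<in> C q" if q: "q \<in> {1..n'}" for q
  proof -
    have a: "F' q \<in> {1..c}" using ordered_surj_range[OF F' q] .
    have "first_preimage F n (F' q) \<in> C q"
      unfolding C_def using first_preimage_in[OF F a] first[OF a] first_preimage_le[OF q] by auto
    then show ?thesis unfolding H_def using q Max_in[OF finite_C] by auto
  qed
  have H_\<iota>: "H (\<iota> p) = p" if p: "p \<in> {1..n}" for p
  proof -
    have "Max (C (\<iota> p)) = p"
    proof (rule Max_eqI[OF finite_C])
      show "p \<in> C (\<iota> p)" unfolding C_def using p same_value[OF p] by simp
      show "k \<le> p" if k: "k \<in> C (\<iota> p)" for k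
      proof (rule ccontr)
        assume "\<not> k \<le> p"
        then have "\<iota> p < \<iota> k" using strict_mono_onD[OF mono p] k unfolding C_def by simp
        then show False using k unfolding C_def by simp
      qed
    qed
    moreover have "\<iota> p \<in> {1..n'}" using range p by blast
    ultimately show ?thesis unfolding H_def by simp
  qed
  have "ordered_surj H n' n"
  proof (rule ordered_surjI[OF _ _ mono range H_\<iota>])
    show "H ` {1..n'} \<subseteq> {1..n}" using H_in_C unfolding C_def by blast
    show "H q = 0" if "q \<notin> {1..n'}" for q unfolding H_def using that by (rule if_not_P)
    show "\<iota> (H q) \<le> q" if "q \<in> {1..n'}" for q using H_in_C[OF that] unfolding C_def by simp
  qed
  moreover have "F (H q) = F' q" if "q \<in> {1..n'}" for q
    using H_in_C[OF that] unfolding C_def by simp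
  ultimately show ?thesis by (rule that)
qed

lemma gOS_factor:
  assumes x: "(n, c, F, G) \<in> gOS_Hom n c" and y: "(n', c, F', G') \<in> gOS_Hom n' c"
    and H: "ordered_surj H n' n" and FH: "\<And>q. q \<in> {1..n'} \<Longrightarrow> F (H q) = F' q"
    and G: "\<And>a. a \<in> {1..c} \<Longrightarrow> G a \<le> G' a"
  shows "\<exists>h \<in> gOS_Hom n' n. (n', c, F', G') = gOS_comp (n, c, F, G) h"
proof -
  have F: "ordered_surj F n c" using x by (simp add: mem_gOS_Hom)
  have F': "ordered_surj F' n' c" and G': "\<forall>a. a \<notin> {1..c} \<longrightarrow> G' a = 0"
    using y by (simp_all add: mem_gOS_Hom)
  define K where "K p = (if p \<in> {1..n} \<and> first_preimage F n (F p) = p then G' (F p) - G (F p) else 0)"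
    for p
  have K_sum: "(\<Sum>p \<in> {p \<in> {1..n}. F p = a}. K p) = G' a - G a" if a: "a \<in> {1..c}" for a
  proof -
    have "(\<Sum>p \<in> {p \<in> {1..n}. F p = a}. K p) =
        (\<Sum>p \<in> {p \<in> {1..n}. F p = a}. if p = first_preimage F n a then G' a - G a else 0)"
      by (rule sum.cong) (auto simp: K_def)
    also have "\<dots> = G' a - G a" using first_preimage_in[OF F a] by simp
    finally show ?thesis .
  qed
  have "(\<lambda>q. if q \<in> {1..n'} then F (H q) else 0) = F'"
    using FH ordered_surj_outside[OF F'] by auto
  moreover have "(\<lambda>a. if a \<in> {1..c} then G a + (\<Sum>p \<in> {p \<in> {1..n}. F p = a}. K p) else 0) = G'"
  proof
    fix a show "(if a \<in> {1..c} then G a + (\<Sum>p \<in> {p \<in> {1..n}. F p = a}. K p) else 0) = G' a"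
      using K_sum[of a] G[of a] G'[rule_format, of a] by (cases "a \<in> {1..c}") simp_all
  qed
  ultimately have "(n', c, F', G') = gOS_comp (n, c, F, G) (n', n, H, K)"
    by (simp add: gOS_comp_eq)
  moreover have "(n', n, H, K) \<in> gOS_Hom n' n"
    using H by (simp add: mem_gOS_Hom K_def)
  ultimately show ?thesis by blast
qed

definition gOS_label :: "(nat \<Rightarrow> nat) \<Rightarrow> (nat \<Rightarrow> nat) \<Rightarrow> nat \<Rightarrow> nat \<Rightarrow> (nat \<times> bool) \<times> nat" where
  "gOS_label F G n p =
     (let is_first = (first_preimage F n (F p) = p) in ((F p, is_first), if is_first then G (F p) else 0))"

definition gOS_word :: "gos_mor \<Rightarrow> ((nat \<times> bool) \<times> nat) list" where
  "gOS_word x = (case x of (n, m, F, G) \<Rightarrow> tuple (gOS_label F G n) n)"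

lemma fst_eq_snd_le_gOS_label:
  "fst_eq_snd_le (gOS_label F G n p) (gOS_label F' G' n' q) \<longleftrightarrow>
     F' q = F p \<and> (first_preimage F' n' (F p) = q \<longleftrightarrow> first_preimage F n (F p) = p) \<and>
     (first_preimage F n (F p) = p \<longrightarrow> G (F p) \<le> G' (F p))"
  unfolding fst_eq_snd_le_def gOS_label_def Let_def by auto

lemma gOS_word_in_lists:
  assumes "x \<in> gOS_Hom n c"
  shows "gOS_word x \<in> lists (({1..c} \<times> UNIV) \<times> UNIV)"
proof -
  obtain F G where "x = (n, c, F, G)" "ordered_surj F n c" using assms by (rule gOS_HomE)
  then show ?thesis
    using ordered_surj_range by (auto simp: gOS_word_def tuple_def gOS_label_def Let_def)
qed

lemma gOS_word_emb_imp_factor: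
  assumes x: "x \<in> gOS_Hom n c" and y: "y \<in> gOS_Hom n' c"
    and emb: "list_emb fst_eq_snd_le (gOS_word x) (gOS_word y)"
  shows "\<exists>h \<in> gOS_Hom n' n. y = gOS_comp x h"
proof -
  obtain F G where x': "x = (n, c, F, G)" "ordered_surj F n c" using x by (rule gOS_HomE)
  obtain F' G' where y': "y = (n', c, F', G')" "ordered_surj F' n' c" using y by (rule gOS_HomE)
  have "list_emb fst_eq_snd_le (tuple (gOS_label F G n) n) (tuple (gOS_label F' G' n') n')"
    using emb unfolding x'(1) y'(1) gOS_word_def by simp
  then obtain \<iota> where mono: "strict_mono_on {1..n} \<iota>" and range: "\<iota> ` {1..n} \<subseteq> {1..n'}"
    and label: "\<And>p. p \<in> {1..n} \<Longrightarrow> fst_eq_snd_le (gOS_label F G n p) (gOS_label F' G' n' (\<iota> p))"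
    by (rule list_emb_tuple) blast
  have same_value: "F' (\<iota> p) = F p"
    and same_first: "first_preimage F' n' (F p) = \<iota> p \<longleftrightarrow> first_preimage F n (F p) = p"
    and grading_le: "first_preimage F n (F p) = p \<Longrightarrow> G (F p) \<le> G' (F p)"
    if "p \<in> {1..n}" for p
    using label[OF that] unfolding fst_eq_snd_le_gOS_label by simp_all
  have first: "\<iota> (first_preimage F n a) = first_preimage F' n' a"
    and G: "G a \<le> G' a" if a: "a \<in> {1..c}" for a
  proof -
    let ?p = "first_preimage F n a"
    have p: "?p \<in> {1..n}" "F ?p = a" using first_preimage_in[OF x'(2) a] by simp_all
    then have "first_preimage F n (F ?p) = ?p" by simp
    then show "\<iota> ?p = first_preimage F' n' a" "G a \<le> G' a"
      using same_first[OF p(1)] grading_le[OF p(1)] p(2) by simp_all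
  qed
  obtain H where H: "ordered_surj H n' n" "\<And>q. q \<in> {1..n'} \<Longrightarrow> F (H q) = F' q"
    using ordered_surj_factor[OF x'(2) y'(2) mono range same_value first] by blast
  show ?thesis using gOS_factor[of n c F G n' F' G' H] x y H G unfolding x'(1) y'(1) by blast
qed

lemma gOSop_noetherian: "noetherian_under (UNIV :: nat set) gOSop_Hom gOSop_comp c"
  unfolding noetherian_under_def
proof (intro allI impI)
  fix x :: "nat \<Rightarrow> gos_mor"
  assume out: "\<forall>k. x k \<in> out_mor UNIV gOSop_Hom c"
  define n where "n k = fst (x k)" for k
  have x: "x k \<in> gOS_Hom (n k) c" for k
  proof -
    obtain m where m: "x k \<in> gOS_Hom m c" using out unfolding out_mor_def gOSop_Hom_def by blast
    then have "n k = m" unfolding n_def by (elim gOS_HomE) simp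
    with m show ?thesis by simp
  qed
  have "almost_full_on (list_emb fst_eq_snd_le) (lists (({1..c} \<times> (UNIV :: bool set)) \<times> (UNIV :: nat set)))"
    by (intro almost_full_on_lists almost_full_on_fst_eq_snd_le finite_cartesian_product) simp_all
  then have "\<exists>i j. i < j \<and> list_emb fst_eq_snd_le (gOS_word (x i)) (gOS_word (x j))"
    by (rule almost_full_onD) (rule gOS_word_in_lists[OF x])
  then obtain i j where "i < j" and emb: "list_emb fst_eq_snd_le (gOS_word (x i)) (gOS_word (x j))"
    by blast
  obtain h where "h \<in> gOS_Hom (n j) (n i)" "x j = gOS_comp (x i) h"
    using gOS_word_emb_imp_factor[OF x x emb] by blast
  then have "mor_le UNIV gOSop_Hom gOSop_comp c (x i) (x j)"
    unfolding mor_le_def gOSop_Hom_def gOSop_comp_def using x[of i] by blast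
  with \<open>i < j\<close> show "\<exists>i j. i < j \<and> mor_le UNIV gOSop_Hom gOSop_comp c (x i) (x j)" by blast
qed

theorem proposition4p8:
  shows "groebner (UNIV :: nat set) gOSop_Hom gOSop_comp"
  unfolding groebner_def using gOSop_admissible_order gOSop_noetherian by blast

end
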